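(* Let $n\geq 2$, let $A\in\mathbb{R}^{n\times n}$ be a symmetric matrix and $e\in\mathbb{R}^n$ a vector. Then $$|e|^4|A|^2\geq 2|e|^2|Ae|^2+\frac{\big(|e|^2\operatorname{tr}(A)-\langle e,Ae\rangle\big)^2}{n-1}-\langle e,Ae\rangle^2.$$ If $n=2$, equality holds.
   Context: $|A|$ denotes the Hilbert–Schmidt (Frobenius) norm of $A$, $|A|^2=\operatorname{tr}(A^\intercal A)$. *)

theory Defs
  imports "HOL-Analysis.Analysis"
begin

definition hs_norm_sq :: "real^'n^'n \<Rightarrow> real" where
  "hs_norm_sq A = trace (transpose A ** A)"

end

theory Submission
  imports Defs
begin

text \<open>Write \<open>s = |e|\<^sup>2\<close>, \<open>w = Ae\<close>, \<open>a = \<langle>e,Ae\<rangle>\<close> and let \<open>Q = I - e e\<^sup>T/s\<close> be the orthogonal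
  projection onto \<open>e\<^sup>\<bottom>\<close>. The compression \<open>QAQ\<close> lives on an \<open>(n-1)\<close>-dimensional space, so
  Cauchy-Schwarz for the Frobenius inner product gives \<open>tr(QAQ)\<^sup>2 \<le> (n-1)|QAQ|\<^sup>2\<close>.
  Expanding, \<open>s tr(QAQ) = s tr A - a\<close> and \<open>s\<^sup>2|QAQ|\<^sup>2 = s\<^sup>2|A|\<^sup>2 - 2s|w|\<^sup>2 + a\<^sup>2\<close>, which is the
  inequality. To avoid dividing by \<open>s\<close> we apply Cauchy-Schwarz to \<open>sQ\<close> and \<open>s\<^sup>2QAQ\<close>.
  For \<open>n = 2\<close> the space \<open>e\<^sup>\<bottom>\<close> is a line, so \<open>QAQ\<close> is a multiple of \<open>Q\<close> and equality holds; there the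
  identity is simply checked in coordinates.\<close>

definition outer_product :: "real^'n \<Rightarrow> real^'m \<Rightarrow> real^'m^'n" where
  "outer_product x y = (\<chi> i j. x$i * y$j)"

lemma outer_product_mult_vec [simp]: "outer_product x y *v z = (y \<bullet> z) *\<^sub>R x"
  by (simp add: outer_product_def matrix_vector_mult_def inner_vec_def vec_eq_iff
      sum_distrib_left mult_ac)

lemma inner_outer_product_right: "A \<bullet> outer_product x y = x \<bullet> (A *v y)"
  by (simp add: outer_product_def inner_vec_def matrix_vector_mult_def sum_distrib_left mult_ac)

lemma inner_outer_product_left: "outer_product x y \<bullet> A = x \<bullet> (A *v y)"
  by (simp add: inner_commute[of _ A] inner_outer_product_right)

lemma inner_mat_1_left: "mat 1 \<bullet> A = trace (A :: real^'n^'n)"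
  unfolding inner_vec_def mat_def trace_def
  by (simp add: if_distrib[where f = "\<lambda>c. c * _"] cong: if_cong)

lemma hs_norm_sq_eq_inner: "hs_norm_sq A = A \<bullet> A"
  unfolding hs_norm_sq_def trace_def inner_vec_def matrix_matrix_mult_def transpose_def
  by (simp add: power2_eq_square) (rule sum.swap)

lemma symmetric_matrix_inner:
  fixes A :: "real^'n^'n"
  assumes "transpose A = A"
  shows "x \<bullet> (A *v y) = (A *v x) \<bullet> y"
  by (metis assms dot_lmul_matrix vector_transpose_matrix)

lemma compression_trace_bound:
  fixes A :: "real^'n^'n" and e :: "real^'n"
  assumes sym: "transpose A = A"
  shows "(norm e ^ 2 * trace A - e \<bullet> (A *v e)) ^ 2
    \<le> (real CARD('n) - 1) *
       (norm e ^ 4 * hs_norm_sq A - 2 * norm e ^ 2 * norm (A *v e) ^ 2 + (e \<bullet> (A *v e)) ^ 2)"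
proof (cases "e = 0")
  case True
  then show ?thesis by simp
next
  case False
  define s where "s = e \<bullet> e"
  define w where "w = A *v e"
  define a where "a = e \<bullet> w"
  define n where "n = real CARD('n)"
  \<comment> \<open>\<open>P = sQ\<close> and \<open>D = s\<^sup>2QAQ\<close>, expanded using \<open>Ae = w\<close> and \<open>e\<^sup>TA = w\<^sup>T\<close>\<close>
  define P where "P = s *\<^sub>R mat 1 - outer_product e e"
  define D where "D = s\<^sup>2 *\<^sub>R A - s *\<^sub>R (outer_product e w + outer_product w e) + a *\<^sub>R outer_product e e"
  have "s > 0"
    using False by (simp add: s_def)
  have inner_e_Aw: "e \<bullet> (A *v w) = w \<bullet> w"
    using symmetric_matrix_inner[OF sym, of e w] by (simp add: w_def)
  note distrib = inner_add_left inner_add_right inner_diff_left inner_diff_right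
    inner_scaleR_left inner_scaleR_right
  note expand = inner_outer_product_left inner_outer_product_right inner_mat_1_left
    trace_I hs_norm_sq_eq_inner inner_commute[of w e] power2_eq_square
  have PD: "P \<bullet> D = s\<^sup>2 * (s * trace A - a)"
    unfolding P_def D_def distrib
    by (simp add: expand inner_e_Aw s_def[symmetric] a_def[symmetric] w_def[symmetric])
  have PP: "P \<bullet> P = s\<^sup>2 * (n - 1)"
    unfolding P_def distrib by (simp add: expand s_def[symmetric] n_def right_diff_distrib)
  have DD: "D \<bullet> D = s\<^sup>2 * (s\<^sup>2 * hs_norm_sq A - 2 * s * (w \<bullet> w) + a\<^sup>2)"
    unfolding D_def distrib
    by (simp add: expand inner_e_Aw s_def[symmetric] a_def[symmetric] w_def[symmetric]) algebra
  have "(s\<^sup>2)\<^sup>2 * (s * trace A - a)\<^sup>2 \<le> (s\<^sup>2)\<^sup>2 * ((n - 1) * (s\<^sup>2 * hs_norm_sq A - 2 * s * (w \<bullet> w) + a\<^sup>2))"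
    using Cauchy_Schwarz_ineq[of P D] unfolding PD PP DD by (simp add: power_mult_distrib mult_ac)
  then have bound: "(s * trace A - a)\<^sup>2 \<le> (n - 1) * (s\<^sup>2 * hs_norm_sq A - 2 * s * (w \<bullet> w) + a\<^sup>2)"
    using \<open>s > 0\<close> by simp
  have norm_e: "norm e ^ 2 = s" and norm_Ae: "norm (A *v e) ^ 2 = w \<bullet> w"
    by (simp_all add: s_def w_def power2_norm_eq_inner)
  have norm_e4: "norm e ^ 4 = s\<^sup>2"
    by (simp flip: norm_e)
  have quadratic_form: "e \<bullet> (A *v e) = a"
    by (simp add: a_def w_def)
  show ?thesis
    unfolding norm_e4 norm_e norm_Ae quadratic_form n_def[symmetric] using bound .
qed

lemma compression_trace_eq_card_2:
  fixes A :: "real^'n^'n" and e :: "real^'n"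
  assumes two: "CARD('n) = 2" and sym: "transpose A = A"
  shows "(norm e ^ 2 * trace A - e \<bullet> (A *v e)) ^ 2
    = norm e ^ 4 * hs_norm_sq A - 2 * norm e ^ 2 * norm (A *v e) ^ 2 + (e \<bullet> (A *v e)) ^ 2"
proof -
  obtain i j :: 'n where UNIV_eq: "UNIV = {i, j}" and "i \<noteq> j"
    using two unfolding card_2_iff by blast
  have sum_UNIV: "sum f UNIV = f i + f j" for f :: "'n \<Rightarrow> real"
    unfolding UNIV_eq using \<open>i \<noteq> j\<close> by simp
  have A_sym: "A $ j $ i = A $ i $ j"
    using sym unfolding transpose_def vec_eq_iff by simp
  have norm_e: "norm e ^ 2 = e \<bullet> e" and norm_Ae: "norm (A *v e) ^ 2 = (A *v e) \<bullet> (A *v e)"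
    by (simp_all add: power2_norm_eq_inner)
  have norm_e4: "norm e ^ 4 = (e \<bullet> e)\<^sup>2"
    by (simp flip: norm_e)
  show ?thesis
    unfolding norm_e4 norm_e norm_Ae
    by (simp add: sum_UNIV A_sym hs_norm_sq_def trace_def inner_vec_def matrix_matrix_mult_def
        matrix_vector_mult_def transpose_def) algebra
qed

theorem lemma2p1:
  fixes A :: "real^'n^'n" and e :: "real^'n"
  assumes "CARD('n) \<ge> 2" and "transpose A = A"
  shows "(norm e ^ 4 * hs_norm_sq A \<ge>
           2 * norm e ^ 2 * norm (A *v e) ^ 2
           + (norm e ^ 2 * trace A - e \<bullet> (A *v e)) ^ 2 / (real CARD('n) - 1)
           - (e \<bullet> (A *v e)) ^ 2) \<and>
         (CARD('n) = 2 \<longrightarrow> norm e ^ 4 * hs_norm_sq A =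
           2 * norm e ^ 2 * norm (A *v e) ^ 2
           + (norm e ^ 2 * trace A - e \<bullet> (A *v e)) ^ 2 / (real CARD('n) - 1)
           - (e \<bullet> (A *v e)) ^ 2)"
proof -
  have "real CARD('n) - 1 > 0"
    using assms(1) by simp
  then have "(norm e ^ 2 * trace A - e \<bullet> (A *v e)) ^ 2 / (real CARD('n) - 1)
    \<le> norm e ^ 4 * hs_norm_sq A - 2 * norm e ^ 2 * norm (A *v e) ^ 2 + (e \<bullet> (A *v e)) ^ 2"
    using compression_trace_bound[OF assms(2), of e] by (simp add: divide_simps mult.commute)
  moreover have "CARD('n) = 2 \<Longrightarrow> (norm e ^ 2 * trace A - e \<bullet> (A *v e)) ^ 2 / (real CARD('n) - 1)
    = norm e ^ 4 * hs_norm_sq A - 2 * norm e ^ 2 * norm (A *v e) ^ 2 + (e \<bullet> (A *v e)) ^ 2"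
    using compression_trace_eq_card_2[OF _ assms(2), of e] by simp
  ultimately show ?thesis
    by linarith
qed

end
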